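(* Let $0<p\le q\le 1$ and define $f\colon(0,\infty)\to\mathbb{R}$ by \[ f(t)=\frac{p}{q}\cdot\frac{t^q-1}{t^p-1}\quad (t>0,\ t\neq 1),\qquad f(1)=1. \] Then for every $t>0$, \[ f(t)=\frac{p}{q}+\frac{p}{q}\int_0^\infty\frac{t}{\lambda (t+\lambda)}\cdot \frac{\lambda^{p+q}\sin((q-p)\pi) - \lambda^q\sin(q\pi) + \lambda^p\sin(p\pi)}{\pi(\lambda^{2p}-2\lambda^p\cos(p\pi)+1)}\,d\lambda . \] *)

theory Defs
  imports "HOL-Analysis.Analysis"
begin

definition fpq :: "real \<Rightarrow> real \<Rightarrow> real \<Rightarrow> real" where
  "fpq p q t = (if t = 1 then 1 else (p / q) * ((t powr q - 1) / (t powr p - 1)))"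

definition kernel_pq :: "real \<Rightarrow> real \<Rightarrow> real \<Rightarrow> real \<Rightarrow> real" where
  "kernel_pq p q t l =
     t / (l * (t + l)) *
     ((l powr (p + q) * sin ((q - p) * pi) - l powr q * sin (q * pi) + l powr p * sin (p * pi))
      / (pi * (l powr (2 * p) - 2 * l powr p * cos (p * pi) + 1)))"

end

theory Submission
  imports Defs "HOL-Complex_Analysis.Complex_Analysis" "HOL-Real_Asymp.Real_Asymp"
begin

(* With k the integrand, consider

     G(w) = (e^(qw) - e^(pw)) / (e^(pw) - 1) * t / (e^w - t).

   On the lines Im w = -pi and Im w = pi we have e^w = -e^x, and
   G(x - i pi) - G(x + i pi) = 2 pi i e^x k(e^x); so, after substituting lambda = e^x, the integral
   of k over [e^-R, e^R] is the integral of G along the long sides of the rectangle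
   [-R, R] x [-pi, pi]. Inside the rectangle G has a single simple pole, at w = ln t, with residue
   (t^q - t^p) / (t^p - 1) = (q/p) f(t) - 1, so Cauchy's integral formula evaluates the integral
   around the rectangle. The short sides contribute O(t e^((q-p-1)R) + e^(-pR)), which vanishes
   as R -> infinity. Integrability of k on (0, infinity) comes from k(lambda) = O(lambda^(p-1))
   at 0 and k(lambda) = O(lambda^(q-p-2)) at infinity. *)

section \<open>The strip and the holomorphic ratio\<close>

definition diff_quotient :: "(complex \<Rightarrow> complex) \<Rightarrow> complex \<Rightarrow> complex \<Rightarrow> complex" where
  "diff_quotient f a z = (if z = a then deriv f a else (f z - f a) / (z - a))"

lemma holomorphic_diff_quotient: "f holomorphic_on UNIV \<Longrightarrow> diff_quotient f a holomorphic_on UNIV"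
  unfolding diff_quotient_def[abs_def] by (rule pole_lemma) auto

lemma deriv_exp_scaled: "deriv (\<lambda>z. exp (of_real a * z)) 0 = of_real a"
  by (rule DERIV_imp_deriv) (auto intro!: derivative_eq_intros)

lemma exp_eq_1_Im_less:
  assumes "exp z = 1" "\<bar>Im z\<bar> < 2 * pi"
  shows "z = 0"
proof -
  obtain n :: int where n: "Re z = 0" "Im z = of_int (2 * n) * pi"
    using assms(1) by (auto simp: exp_eq_1)
  have "\<bar>of_int n\<bar> < (1::real)"
    using assms(2) n(2) by (simp add: abs_mult)
  hence "n = 0" by linarith
  with n show ?thesis by (simp add: complex_eq_iff)
qed

(* Wide enough to contain the rectangles |Im w| <= pi, narrow enough that for 0 < p <= 1 the
   equations e^(pw) = 1 and e^w = t have no solutions in it besides 0 and ln t. *)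
definition strip :: "complex set" where
  "strip = {w. \<bar>Im w\<bar> < 2 * pi}"

lemma strip_eq_Int: "strip = {w. Im w < 2 * pi} \<inter> {w. Im w > - (2 * pi)}"
  by (auto simp: strip_def)

lemma convex_strip: "convex strip"
  unfolding strip_eq_Int by (metis convex_Int convex_halfspace_Im_lt convex_halfspace_Im_gt)

lemma open_strip: "open strip"
  unfolding strip_eq_Int by (metis open_Int open_halfspace_Im_lt open_halfspace_Im_gt)

lemma exp_eq_exp_real_in_strip:
  assumes "w \<in> strip" "exp w = exp (of_real s)"
  shows "w = of_real s"
proof -
  have "exp (w - of_real s) = 1" using assms(2) by (simp add: exp_diff)
  moreover have "\<bar>Im (w - of_real s)\<bar> < 2 * pi" using assms(1) by (simp add: strip_def)
  ultimately show ?thesis using exp_eq_1_Im_less by fastforce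
qed

lemma diff_quotient_exp_nonzero:
  assumes "w \<in> strip"
  shows "diff_quotient exp (of_real s) w \<noteq> 0"
  using exp_eq_exp_real_in_strip[OF assms] by (auto simp: diff_quotient_def DERIV_imp_deriv[OF DERIV_exp])

lemma diff_quotient_exp_scaled_nonzero:
  assumes "0 < a" "a \<le> 1" "w \<in> strip"
  shows "diff_quotient (\<lambda>z. exp (of_real a * z)) 0 w \<noteq> 0"
proof (cases "w = 0")
  case False
  have "\<bar>Im (of_real a * w)\<bar> \<le> \<bar>Im w\<bar>"
    using assms by (simp add: abs_mult mult_left_le_one_le)
  hence "\<bar>Im (of_real a * w)\<bar> < 2 * pi" using assms(3) by (simp add: strip_def)
  hence "exp (of_real a * w) \<noteq> 1" using exp_eq_1_Im_less False assms(1) by fastforce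
  thus ?thesis using False by (simp add: diff_quotient_def)
qed (use assms in \<open>simp add: diff_quotient_def deriv_exp_scaled\<close>)

(* (e^(qw) - e^(pw)) / (e^(pw) - 1), extended across its removable singularity at 0. *)
definition exp_ratio :: "real \<Rightarrow> real \<Rightarrow> complex \<Rightarrow> complex" where
  "exp_ratio p q w = exp (of_real p * w) * diff_quotient (\<lambda>z. exp (of_real (q - p) * z)) 0 w
                       / diff_quotient (\<lambda>z. exp (of_real p * z)) 0 w"

lemma holomorphic_exp_ratio:
  assumes "0 < p" "p \<le> 1"
  shows "exp_ratio p q holomorphic_on strip"
proof -
  have "diff_quotient (\<lambda>z. exp (of_real a * z)) 0 holomorphic_on strip" for a
    by (rule holomorphic_on_subset[OF holomorphic_diff_quotient]) (auto intro!: holomorphic_intros)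
  thus ?thesis unfolding exp_ratio_def[abs_def] using diff_quotient_exp_scaled_nonzero[OF assms]
    by (auto simp del: of_real_diff intro!: holomorphic_intros)
qed

lemma exp_ratio_eq:
  assumes "w \<noteq> 0"
  shows "exp_ratio p q w = (exp (of_real q * w) - exp (of_real p * w)) / (exp (of_real p * w) - 1)"
proof -
  have "exp (of_real p * w) * exp (of_real (q - p) * w) = exp (of_real q * w)"
    by (simp add: mult_exp_exp algebra_simps)
  thus ?thesis using assms
    by (cases "exp (of_real p * w) = 1") (simp_all add: exp_ratio_def diff_quotient_def field_simps)
qed

lemma exp_ratio_0: "0 < p \<Longrightarrow> exp_ratio p q 0 = of_real ((q - p) / p)"
  by (simp add: exp_ratio_def diff_quotient_def deriv_exp_scaled del: of_real_diff)

lemma exp_ratio_ln: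
  assumes "0 < t" "t \<noteq> 1"
  shows "exp_ratio p q (of_real (ln t)) = of_real ((t powr q - t powr p) / (t powr p - 1))"
proof -
  have e: "exp (of_real a * of_real (ln t)) = (of_real (t powr a) :: complex)" for a
    using assms by (simp add: powr_def exp_of_real[symmetric] mult.commute)
  have "of_real (ln t) \<noteq> (0::complex)" using assms by simp
  hence "exp_ratio p q (of_real (ln t)) = (exp (of_real q * of_real (ln t)) - exp (of_real p * of_real (ln t)))
          / (exp (of_real p * of_real (ln t)) - 1)"
    by (rule exp_ratio_eq)
  thus ?thesis unfolding e by simp
qed

lemma exp_ratio_cnj: "exp_ratio p q (cnj w) = cnj (exp_ratio p q w)"
proof (cases "w = 0")
  case True
  thus ?thesis by (simp add: exp_ratio_def diff_quotient_def deriv_exp_scaled del: of_real_diff)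
next
  case False
  thus ?thesis by (simp add: exp_ratio_eq exp_cnj)
qed

lemma fpq_eq_exp_ratio:
  assumes "0 < p" "p \<le> q" "0 < t"
  shows "fpq p q t = p / q + p / q * Re (exp_ratio p q (of_real (ln t)))"
proof (cases "t = 1")
  case True
  thus ?thesis using assms by (simp add: fpq_def exp_ratio_0 field_simps)
next
  case False
  have "t powr p \<noteq> 1" using False assms by (simp add: powr_def)
  hence "(t powr q - 1) / (t powr p - 1) = 1 + (t powr q - t powr p) / (t powr p - 1)"
    by (simp add: field_simps)
  thus ?thesis using False assms by (simp add: fpq_def exp_ratio_ln algebra_simps)
qed

definition contour_integrand :: "real \<Rightarrow> real \<Rightarrow> real \<Rightarrow> complex \<Rightarrow> complex" where
  "contour_integrand p q t w = exp_ratio p q w * of_real t / (exp w - of_real t)"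

lemma holomorphic_contour_integrand:
  assumes "0 < p" "p \<le> 1" "0 < t"
  shows "contour_integrand p q t holomorphic_on strip - {of_real (ln t)}"
proof -
  have "exp w \<noteq> of_real t" if "w \<in> strip - {of_real (ln t)}" for w
    using exp_eq_exp_real_in_strip[of w "ln t"] that assms(3) by (auto simp: exp_of_real)
  thus ?thesis unfolding contour_integrand_def[abs_def]
    using holomorphic_on_subset[OF holomorphic_exp_ratio[OF assms(1,2)]]
    by (auto intro!: holomorphic_intros)
qed

lemma continuous_on_contour_integrand:
  assumes "0 < p" "p \<le> 1" "0 < t" "S \<subseteq> strip - {of_real (ln t)}"
  shows "continuous_on S (contour_integrand p q t)"
  using holomorphic_on_imp_continuous_on[OF holomorphic_contour_integrand[OF assms(1-3)]] assms(4)
  by (rule continuous_on_subset)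

section \<open>The kernel\<close>

lemma one_minus_cos_pos:
  assumes "0 < p" "p \<le> 1"
  shows "0 < 1 - cos (p * pi)"
proof -
  have "cos (p * pi) < cos 0"
    using assms by (intro cos_monotone_0_pi) (auto simp: mult_le_cancel_right1)
  thus ?thesis by simp
qed

lemma quadratic_cos_lower_bound:
  fixes a c :: real
  assumes "0 \<le> a" "\<bar>c\<bar> \<le> 1"
  shows "(1 - c) * (1 + a\<^sup>2) / 2 \<le> a\<^sup>2 - 2 * a * c + 1"
proof -
  have "0 \<le> ((1 + c) * (a - 1)\<^sup>2 + 2 * a * (1 - c)) / 2"
    using assms by (simp add: abs_le_iff)
  also have "\<dots> = a\<^sup>2 - 2 * a * c + 1 - (1 - c) * (1 + a\<^sup>2) / 2"
    by (simp add: power2_eq_square field_simps)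
  finally show ?thesis by simp
qed

lemma kernel_denominator_lower_bound:
  assumes "0 \<le> l"
  shows "(1 - cos (p * pi)) * (1 + (l powr p)\<^sup>2) / 2 \<le> l powr (2 * p) - 2 * l powr p * cos (p * pi) + 1"
proof -
  have "l powr (2 * p) = (l powr p)\<^sup>2"
    unfolding power2_eq_square by (simp only: mult_2 powr_add)
  thus ?thesis by (simp only: quadratic_cos_lower_bound powr_ge_zero abs_cos_le_one)
qed

lemma kernel_denominator_pos:
  assumes "0 < p" "p \<le> 1" "0 \<le> l"
  shows "0 < l powr (2 * p) - 2 * l powr p * cos (p * pi) + 1"
proof -
  have "0 < (1 - cos (p * pi)) * (1 + (l powr p)\<^sup>2) / 2"
    using one_minus_cos_pos[OF assms(1,2)] by (intro divide_pos_pos mult_pos_pos add_pos_nonneg) auto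
  thus ?thesis using kernel_denominator_lower_bound[OF assms(3), of p] by linarith
qed

lemma continuous_on_kernel_pq:
  assumes "0 < p" "p \<le> 1" "0 < t"
  shows "continuous_on {0<..} (kernel_pq p q t)"
proof -
  have "x * (t + x) \<noteq> 0" "pi * (x powr (2 * p) - 2 * x powr p * cos (p * pi) + 1) \<noteq> 0"
    if "x \<in> {0<..}" for x
    using that assms(3) kernel_denominator_pos[OF assms(1,2), of x] by auto
  thus ?thesis unfolding kernel_pq_def[abs_def] by (intro continuous_intros) auto
qed

lemma abs_kernel_pq_le:
  fixes p q t x :: real
  assumes "0 < p" "p \<le> 1" "0 < t" "0 < x"
  defines "a \<equiv> x powr p" and "b \<equiv> x powr q"
  shows "\<bar>kernel_pq p q t x\<bar>
           \<le> t / (x * (t + x)) * (2 * (a * b + b + a) / (pi * (1 - cos (p * pi)) * (1 + a\<^sup>2)))"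
proof -
  define D where "D = x powr (2 * p) - 2 * a * cos (p * pi) + 1"
  define N where "N = x powr (p + q) * sin ((q - p) * pi) - b * sin (q * pi) + a * sin (p * pi)"
  have D: "(1 - cos (p * pi)) * (1 + a\<^sup>2) / 2 \<le> D" "0 < (1 - cos (p * pi)) * (1 + a\<^sup>2)"
    using kernel_denominator_lower_bound[of x p] one_minus_cos_pos[OF assms(1,2)] assms(4)
    by (auto simp: D_def a_def add_pos_nonneg)
  have "\<bar>N\<bar> \<le> \<bar>x powr (p + q) * sin ((q - p) * pi)\<bar> + \<bar>b * sin (q * pi)\<bar> + \<bar>a * sin (p * pi)\<bar>"
    unfolding N_def by linarith
  also have "\<dots> \<le> a * b + b + a"
    unfolding a_def b_def powr_add by (intro add_mono) (auto simp: abs_mult intro!: mult_left_le)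
  finally have "\<bar>N\<bar> / (pi * D) \<le> (a * b + b + a) / (pi * ((1 - cos (p * pi)) * (1 + a\<^sup>2) / 2))"
    using D by (intro frac_le mult_left_mono) auto
  also have "\<dots> = 2 * (a * b + b + a) / (pi * (1 - cos (p * pi)) * (1 + a\<^sup>2))"
    by (simp add: field_simps)
  finally have "t / (x * (t + x)) * (\<bar>N\<bar> / (pi * D)) \<le> t / (x * (t + x)) * \<dots>"
    using assms(3,4) by (intro mult_left_mono) auto
  moreover have "\<bar>kernel_pq p q t x\<bar> = t / (x * (t + x)) * (\<bar>N\<bar> / (pi * D))"
    using assms(3,4) D by (simp add: kernel_pq_def N_def D_def a_def b_def abs_mult abs_divide)
  ultimately show ?thesis by simp
qed

lemma abs_kernel_pq_le_near_0:
  fixes p q t x :: real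
  assumes "0 < p" "p \<le> q" "q \<le> 1" "0 < t" "0 < x" "x < 1"
  shows "\<bar>kernel_pq p q t x\<bar> \<le> 6 / (pi * (1 - cos (p * pi))) * x powr (p - 1)"
proof -
  define a b c where "a = x powr p" and "b = x powr q" and "c = 1 - cos (p * pi)"
  have c: "0 < c" using one_minus_cos_pos assms by (simp add: c_def)
  have ab: "0 < a" "0 < b" "a \<le> 1" "b \<le> a"
    using assms powr_le1[of p x] powr_mono'[of p q x] by (auto simp: a_def b_def)
  hence "a * b \<le> a" by (simp add: mult_left_le)
  hence "a * b + b + a \<le> 3 * a" using ab by linarith
  hence "2 * (a * b + b + a) / (pi * c * (1 + a\<^sup>2)) \<le> 6 * a / (pi * c)"
    using ab c by (intro frac_le) (auto simp: mult_left_mono)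
  moreover have "t / (x * (t + x)) \<le> (t + x) / (x * (t + x))"
    using assms(4,5) by (intro divide_right_mono) auto
  hence "t / (x * (t + x)) \<le> 1 / x"
    using assms(4,5) by simp
  ultimately have "t / (x * (t + x)) * (2 * (a * b + b + a) / (pi * c * (1 + a\<^sup>2))) \<le> 1 / x * (6 * a / (pi * c))"
    using assms(4,5) ab c by (intro mult_mono) auto
  also have "\<dots> = 6 / (pi * c) * x powr (p - 1)"
    using assms(5) by (simp add: a_def powr_diff field_simps)
  finally show ?thesis
    using abs_kernel_pq_le[of p t x q] assms by (simp add: a_def b_def c_def)
qed

lemma abs_kernel_pq_le_at_top:
  fixes p q t x :: real
  assumes "0 < p" "p \<le> q" "q \<le> 1" "0 < t" "1 \<le> x"
  shows "\<bar>kernel_pq p q t x\<bar> \<le> 6 * t / (pi * (1 - cos (p * pi))) * x powr (q - p - 2)"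
proof -
  define a b c where "a = x powr p" and "b = x powr q" and "c = 1 - cos (p * pi)"
  have c: "0 < c" using one_minus_cos_pos assms by (simp add: c_def)
  have ab: "1 \<le> a" "a \<le> b"
    using assms ge_one_powr_ge_zero[of x p] powr_mono[of p q x] by (auto simp: a_def b_def)
  hence "b \<le> a * b" "a \<le> a * b"
    using mult_right_mono[of 1 a b] mult_left_mono[of 1 b a] by auto
  hence "a * b + b + a \<le> 3 * (a * b)" by linarith
  hence "2 * (a * b + b + a) / (pi * c * (1 + a\<^sup>2)) \<le> 6 * (a * b) / (pi * c * a\<^sup>2)"
    using ab c by (intro frac_le) (auto simp: mult_left_mono)
  moreover have "t / (x * (t + x)) \<le> t / x\<^sup>2"
    using assms(4,5) by (intro divide_left_mono) (auto simp: power2_eq_square)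
  ultimately have "t / (x * (t + x)) * (2 * (a * b + b + a) / (pi * c * (1 + a\<^sup>2))) \<le> t / x\<^sup>2 * (6 * (a * b) / (pi * c * a\<^sup>2))"
    using assms(4,5) ab c by (intro mult_mono) auto
  also have "\<dots> = 6 * t / (pi * c) * (b / (a * x\<^sup>2))"
    using ab by (simp add: field_simps power2_eq_square)
  also have "b / (a * x\<^sup>2) = x powr (q - p - 2)"
    using assms(5) by (simp add: a_def b_def powr_diff powr_numeral flip: powr_add)
  finally show ?thesis
    using abs_kernel_pq_le[of p t x q] assms by (simp add: a_def b_def c_def)
qed

lemma integrable_on_powr_split:
  fixes A B \<alpha> \<beta> :: real
  assumes "-1 < \<alpha>" "\<beta> < -1"
  shows "(\<lambda>x. if x < 1 then A * x powr \<alpha> else B * x powr \<beta>) integrable_on {0<..}"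
proof -
  let ?g = "\<lambda>x::real. if x < 1 then A * x powr \<alpha> else B * x powr \<beta>"
  have "((\<lambda>x. x powr \<alpha>) has_integral 1 / (\<alpha> + 1)) {0..1}"
    using has_integral_powr_from_0[of \<alpha> 1] assms(1) by simp
  hence "(\<lambda>x. A * x powr \<alpha>) integrable_on {0..1}"
    using has_integral_mult_right integrable_on_def by blast
  hence "?g integrable_on {0..1}"
    by (rule integrable_spike_finite[where S = "{1}", rotated 2]) auto
  moreover have "((\<lambda>x. x powr \<beta>) has_integral - 1 / (\<beta> + 1)) {1..}"
    using has_integral_powr_to_inf[of \<beta> 1] assms(2) by simp
  hence "(\<lambda>x. B * x powr \<beta>) integrable_on {1..}"
    using has_integral_mult_right integrable_on_def by blast
  hence "?g integrable_on {1..}"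
    by (rule integrable_spike_finite[where S = "{}", rotated 2]) auto
  ultimately have "?g integrable_on ({0..1} \<union> {1..})"
    by (intro integrable_Un) (auto intro: negligible_subset[of "{1}"])
  moreover have "{0..1} \<union> {1..} = {0::real..}" by auto
  ultimately have "?g integrable_on {0..}" by simp
  thus ?thesis
    by (rule integrable_spike_set) (auto intro: negligible_subset[of "{0}"])
qed

lemma set_integrable_kernel_pq:
  assumes "0 < p" "p \<le> q" "q \<le> 1" "0 < t"
  shows "set_integrable lborel {0<..} (kernel_pq p q t)"
proof -
  define g where "g x = (if x < 1 then 6 / (pi * (1 - cos (p * pi))) * x powr (p - 1)
                         else 6 * t / (pi * (1 - cos (p * pi))) * x powr (q - p - 2))" for x
  have cont: "continuous_on {0<..} (kernel_pq p q t)"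
    using assms by (intro continuous_on_kernel_pq) auto
  have open_borel: "{0::real<..} \<in> sets borel" by simp
  have abs_int: "kernel_pq p q t absolutely_integrable_on {0<..}"
  proof (rule measurable_bounded_by_integrable_imp_absolutely_integrable)
    show "kernel_pq p q t \<in> borel_measurable (lebesgue_on {0<..})"
      using open_borel by (intro continuous_imp_measurable_on_sets_lebesgue[OF cont]) auto
    show "g integrable_on {0<..}"
      unfolding g_def using assms by (intro integrable_on_powr_split) auto
    show "norm (kernel_pq p q t x) \<le> g x" if "x \<in> {0<..}" for x
      using that assms abs_kernel_pq_le_near_0[of p q t x] abs_kernel_pq_le_at_top[of p q t x]
      by (auto simp: g_def)
  qed (use open_borel in auto)
  have "(\<lambda>x. indicator {0<..} x *\<^sub>R kernel_pq p q t x) \<in> borel_measurable lborel"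
    using borel_measurable_continuous_on_indicator[OF open_borel cont] by simp
  with abs_int show ?thesis
    unfolding set_integrable_def by (simp add: integrable_completion)
qed

section \<open>Integration around a rectangle\<close>

lemma path_image_rectpath_subset_strip:
  assumes "\<bar>s\<bar> < R"
  shows "path_image (rectpath (Complex (-R) (-pi)) (Complex R pi)) \<subseteq> strip - {of_real s}"
proof -
  have "of_real s \<in> box (Complex (-R) (-pi)) (Complex R pi)"
    using assms by (auto simp: in_box_complex_iff)
  moreover have "cbox (Complex (-R) (-pi)) (Complex R pi) \<subseteq> strip"
    using pi_gt_zero by (auto simp: in_cbox_complex_iff strip_def abs_le_iff simp del: pi_gt_zero)
  ultimately show ?thesis
    using path_image_rectpath_cbox_minus_box[of "Complex (-R) (-pi)" "Complex R pi"] assms by auto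
qed

lemma has_contour_integral_rectpath:
  assumes "0 < p" "p \<le> 1" "0 < t" "\<bar>ln t\<bar> < R"
  shows "(contour_integrand p q t has_contour_integral 2 * pi * \<i> * exp_ratio p q (of_real (ln t)))
           (rectpath (Complex (-R) (-pi)) (Complex R pi))"
proof -
  let ?s = "of_real (ln t) :: complex" and ?\<gamma> = "rectpath (Complex (-R) (-pi)) (Complex R pi)"
  define F where "F w = exp_ratio p q w * of_real t / diff_quotient exp ?s w" for w
  \<comment> \<open>\<open>F w = (w - ln t) * contour_integrand p q t w\<close> away from \<open>ln t\<close>; \<open>F\<close> is holomorphic on the strip\<close>
  have "diff_quotient exp ?s holomorphic_on strip"
    by (rule holomorphic_on_subset[OF holomorphic_diff_quotient]) (auto intro: holomorphic_intros)
  hence "F holomorphic_on strip"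
    unfolding F_def[abs_def] using diff_quotient_exp_nonzero holomorphic_exp_ratio[OF assms(1,2)]
    by (auto intro!: holomorphic_intros)
  moreover have "?s \<in> interior strip"
    using open_strip by (simp add: interior_open) (simp add: strip_def)
  moreover have img: "path_image ?\<gamma> \<subseteq> strip - {?s}"
    by (rule path_image_rectpath_subset_strip[OF assms(4)])
  ultimately have "((\<lambda>w. F w / (w - ?s)) has_contour_integral
      2 * pi * \<i> * winding_number ?\<gamma> ?s * F ?s) ?\<gamma>"
    by (intro Cauchy_integral_formula_convex_simple[OF convex_strip]) auto
  moreover have "winding_number ?\<gamma> ?s = 1"
    using assms(4) by (intro winding_number_rectpath) (auto simp: in_box_complex_iff)
  moreover have "F ?s = exp_ratio p q ?s"
    using assms(3) by (simp add: F_def diff_quotient_def DERIV_imp_deriv[OF DERIV_exp] exp_of_real)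
  moreover have "F w / (w - ?s) = contour_integrand p q t w" if "w \<noteq> ?s" for w
    using that assms(3) by (simp add: F_def diff_quotient_def contour_integrand_def exp_of_real)
  ultimately show ?thesis using img by (auto intro: has_contour_integral_eq)
qed

lemma contour_integral_rectpath:
  assumes "continuous_on (path_image (rectpath a1 a3)) f"
  defines "a2 \<equiv> Complex (Re a3) (Im a1)" and "a4 \<equiv> Complex (Re a1) (Im a3)"
  shows "contour_integral (rectpath a1 a3) f =
           contour_integral (linepath a1 a2) f + contour_integral (linepath a2 a3) f
           + contour_integral (linepath a3 a4) f + contour_integral (linepath a4 a1) f"
proof -
  have "path_image (rectpath a1 a3) =
          closed_segment a1 a2 \<union> closed_segment a2 a3 \<union> closed_segment a3 a4 \<union> closed_segment a4 a1"
    by (simp add: rectpath_def Let_def path_image_join Un_assoc a2_def a4_def)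
  hence "f contour_integrable_on linepath a b"
    if "(a, b) \<in> {(a1, a2), (a2, a3), (a3, a4), (a4, a1)}" for a b
    using that assms(1) by (blast intro: contour_integrable_continuous_linepath continuous_on_subset)
  thus ?thesis
    by (simp add: rectpath_def Let_def a2_def a4_def contour_integral_join contour_integrable_joinI
        valid_path_join)
qed

lemma horizontal_segment_subset_strip:
  assumes "\<bar>y\<bar> = pi"
  shows "closed_segment (Complex a y) (Complex b y) \<subseteq> strip - {of_real s}"
  using assms pi_gt_zero by (auto simp: closed_segment_same_Im strip_def complex_eq_iff simp del: pi_gt_zero)

lemma vertical_segment_subset_strip:
  assumes "\<bar>s\<bar> < \<bar>x\<bar>"
  shows "closed_segment (Complex x (-pi)) (Complex x pi) \<subseteq> strip - {of_real s}"
  using assms pi_gt_zero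
  by (auto simp: closed_segment_same_Re closed_segment_eq_real_ivl strip_def complex_eq_iff simp del: pi_gt_zero)

lemma Im_ratio_cis:
  fixes a b \<alpha> \<beta> :: real
  shows "Im ((of_real b * cis \<beta> - of_real a * cis \<alpha>) / (of_real a * cis \<alpha> - 1))
           = (a * b * sin (\<beta> - \<alpha>) - b * sin \<beta> + a * sin \<alpha>) / (a\<^sup>2 - 2 * a * cos \<alpha> + 1)"
proof -
  let ?X = "of_real b * cis \<beta> - of_real a * cis \<alpha>" and ?Y = "of_real a * cis \<alpha> - 1"
  have num: "Im ?X * Re ?Y - Re ?X * Im ?Y = a * b * sin (\<beta> - \<alpha>) - b * sin \<beta> + a * sin \<alpha>"
    by (simp add: sin_diff algebra_simps)
  have "(Re ?Y)\<^sup>2 + (Im ?Y)\<^sup>2 = a\<^sup>2 * (sin \<alpha>)\<^sup>2 + a\<^sup>2 * (cos \<alpha>)\<^sup>2 - 2 * a * cos \<alpha> + 1"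
    by (simp add: power2_eq_square algebra_simps)
  also have "\<dots> = a\<^sup>2 - 2 * a * cos \<alpha> + 1"
    by (simp flip: distrib_left)
  finally show ?thesis by (simp only: Im_divide num)
qed

lemma exp_scaled_upper_edge:
  "exp (of_real a * Complex x pi) = of_real (exp x powr a) * cis (a * pi)"
proof -
  have "of_real a * Complex x pi = Complex (a * x) (a * pi)" by (simp add: complex_eq_iff)
  thus ?thesis by (simp add: exp_Complex powr_def cis.ctr mult.commute)
qed

lemma Im_exp_ratio_upper_edge:
  "Im (exp_ratio p q (Complex x pi)) =
     (exp x powr (p + q) * sin ((q - p) * pi) - exp x powr q * sin (q * pi) + exp x powr p * sin (p * pi))
     / (exp x powr (2 * p) - 2 * exp x powr p * cos (p * pi) + 1)"
proof -
  define a b where "a = exp x powr p" and "b = exp x powr q"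
  have "exp_ratio p q (Complex x pi) = (exp (of_real q * Complex x pi) - exp (of_real p * Complex x pi))
      / (exp (of_real p * Complex x pi) - 1)"
    by (rule exp_ratio_eq) (simp add: complex_eq_iff)
  also have "\<dots> = (of_real b * cis (q * pi) - of_real a * cis (p * pi)) / (of_real a * cis (p * pi) - 1)"
    unfolding a_def b_def exp_scaled_upper_edge ..
  finally have "Im (exp_ratio p q (Complex x pi)) =
      (a * b * sin (q * pi - p * pi) - b * sin (q * pi) + a * sin (p * pi)) / (a\<^sup>2 - 2 * a * cos (p * pi) + 1)"
    by (simp only: Im_ratio_cis)
  moreover have "exp x powr (p + q) = a * b" "exp x powr (2 * p) = a\<^sup>2"
    unfolding a_def b_def power2_eq_square by (simp_all only: mult_2 powr_add)
  ultimately show ?thesis by (simp only: a_def b_def left_diff_distrib)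
qed

lemma contour_integrand_jump:
  assumes "0 < t"
  shows "contour_integrand p q t (Complex x (-pi)) - contour_integrand p q t (Complex x pi)
           = 2 * pi * \<i> * of_real (exp x * kernel_pq p q t (exp x))"
proof -
  let ?z = "exp_ratio p q (Complex x pi)"
  have "Complex x (-pi) = cnj (Complex x pi)" by (simp add: complex_eq_iff)
  hence cnj: "exp_ratio p q (Complex x (-pi)) = cnj ?z" by (simp add: exp_ratio_cnj)
  have e: "exp (Complex x pi) - of_real t = - of_real (exp x + t)"
    "exp (Complex x (-pi)) - of_real t = - of_real (exp x + t)"
    by (simp_all add: exp_Complex complex_eq_iff)
  have "exp x + t > 0" using assms by (simp add: add_pos_pos)
  hence "of_real (exp x + t) \<noteq> (0::complex)" by (simp del: of_real_add)
  hence "contour_integrand p q t (Complex x (-pi)) - contour_integrand p q t (Complex x pi)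
      = (?z - cnj ?z) * of_real (t / (exp x + t))"
    unfolding contour_integrand_def cnj e by (simp add: field_simps del: of_real_add)
  also have "\<dots> = of_real (2 * Im ?z * (t / (exp x + t))) * \<i>"
    by (simp add: complex_diff_cnj mult_ac)
  also have "2 * Im ?z * (t / (exp x + t)) = 2 * pi * (exp x * kernel_pq p q t (exp x))"
  proof -
    obtain N D where "Im ?z = N / D"
      and "kernel_pq p q t (exp x) = t / (exp x * (t + exp x)) * (N / (pi * D))"
      unfolding kernel_pq_def Im_exp_ratio_upper_edge by blast
    thus ?thesis by (simp add: ac_simps)
  qed
  finally show ?thesis by (simp add: mult_ac)
qed

lemma has_integral_horizontal_linepath:
  assumes "f contour_integrable_on linepath (Complex a y) (Complex b y)"
  shows "((\<lambda>u. f (Complex (a + (b - a) * u) y) * of_real (b - a)) has_integral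
           contour_integral (linepath (Complex a y) (Complex b y)) f) {0..1}"
proof -
  from has_contour_integral_integral[OF assms]
  have "((\<lambda>u. f (linepath (Complex a y) (Complex b y) u) * (Complex b y - Complex a y))
      has_integral contour_integral (linepath (Complex a y) (Complex b y)) f) {0..1}"
    by (simp only: has_contour_integral_linepath)
  moreover have "linepath (Complex a y) (Complex b y) u = Complex (a + (b - a) * u) y" for u
    by (simp add: linepath_def complex_eq_iff algebra_simps)
  moreover have "Complex b y - Complex a y = of_real (b - a)"
    by (simp add: complex_eq_iff)
  ultimately show ?thesis by simp
qed

lemma has_integral_exp_substitution:
  fixes f :: "real \<Rightarrow> real"
  assumes "continuous_on {exp (-R)..exp R} f" "0 \<le> R"
  shows "((\<lambda>u. 2 * R * exp (-R + 2 * R * u) * f (exp (-R + 2 * R * u))) has_integral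
           integral {exp (-R)..exp R} f) {0..1}"
proof -
  let ?x = "\<lambda>u. -R + 2 * R * u"
  have "((\<lambda>u. (2 * R * exp (?x u)) *\<^sub>R f (exp (?x u))) has_integral integral {exp (?x 0)..exp (?x 1)} f) {0..1}"
  proof (rule has_integral_substitution[where c = "exp (-R)" and d = "exp R"])
    show "(\<lambda>u. exp (?x u)) ` {0..1} \<subseteq> {exp (-R)..exp R}"
      using assms(2) by (auto simp: mult_left_le)
    show "((\<lambda>u. exp (?x u)) has_field_derivative 2 * R * exp (?x u)) (at u within {0..1})" for u
      by (auto intro!: derivative_eq_intros)
  qed (use assms in auto)
  thus ?thesis by simp
qed

lemma horizontal_edges_integral:
  assumes "0 < p" "p \<le> 1" "0 < t" "0 < R"
  shows "contour_integral (linepath (Complex (-R) (-pi)) (Complex R (-pi))) (contour_integrand p q t)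
         + contour_integral (linepath (Complex R pi) (Complex (-R) pi)) (contour_integrand p q t)
         = 2 * pi * \<i> * of_real (integral {exp (-R)..exp R} (kernel_pq p q t))"
proof -
  let ?G = "contour_integrand p q t" and ?x = "\<lambda>u. -R + 2 * R * u"
  have continuous: "continuous_on (closed_segment (Complex a y) (Complex b y)) ?G"
    if "y = pi \<or> y = -pi" for a b y
    using that assms(1-3) horizontal_segment_subset_strip[of y a b "ln t"]
    by (intro continuous_on_contour_integrand) auto
  have edge: "((\<lambda>u. ?G (Complex (?x u) y) * of_real (2 * R)) has_integral
      contour_integral (linepath (Complex (-R) y) (Complex R y)) ?G) {0..1}"
    if "y = pi \<or> y = -pi" for y
    using has_integral_horizontal_linepath[OF contour_integrable_continuous_linepath[OF continuous[OF that]],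
        of "-R" R]
    by (simp add: algebra_simps flip: mult_2)
  have "((\<lambda>u. (?G (Complex (?x u) (-pi)) - ?G (Complex (?x u) pi)) * of_real (2 * R)) has_integral
      contour_integral (linepath (Complex (-R) (-pi)) (Complex R (-pi))) ?G
      - contour_integral (linepath (Complex (-R) pi) (Complex R pi)) ?G) {0..1}"
    using has_integral_diff[OF edge edge] by (simp add: left_diff_distrib)
  moreover have "((\<lambda>u. (?G (Complex (?x u) (-pi)) - ?G (Complex (?x u) pi)) * of_real (2 * R)) has_integral
      2 * pi * \<i> * of_real (integral {exp (-R)..exp R} (kernel_pq p q t))) {0..1}"
  proof -
    have "continuous_on {exp (-R)..exp R} (kernel_pq p q t)"
      using continuous_on_kernel_pq[OF assms(1-3)]
      by (rule continuous_on_subset) (auto intro: less_le_trans[OF exp_gt_zero])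
    from has_integral_of_real[OF has_integral_exp_substitution[OF this]] assms(4)
    have "((\<lambda>u. of_real (2 * R * exp (?x u) * kernel_pq p q t (exp (?x u))) :: complex) has_integral
        of_real (integral {exp (-R)..exp R} (kernel_pq p q t))) {0..1}"
      by simp
    from has_integral_mult_right[OF this, of "2 * pi * \<i>"] show ?thesis
      using contour_integrand_jump[OF assms(3)] by (simp add: mult_ac)
  qed
  ultimately have "contour_integral (linepath (Complex (-R) (-pi)) (Complex R (-pi))) ?G
      - contour_integral (linepath (Complex (-R) pi) (Complex R pi)) ?G
      = 2 * pi * \<i> * of_real (integral {exp (-R)..exp R} (kernel_pq p q t))"
    by (rule has_integral_unique)
  moreover have "contour_integral (linepath (Complex R pi) (Complex (-R) pi)) ?G
      = - contour_integral (linepath (Complex (-R) pi) (Complex R pi)) ?G"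
    using continuous[of pi R "-R"] by (intro contour_integral_reverse_linepath) auto
  ultimately show ?thesis by simp
qed

definition vertical_edges :: "real \<Rightarrow> real \<Rightarrow> real \<Rightarrow> real \<Rightarrow> complex" where
  "vertical_edges p q t R =
     contour_integral (linepath (Complex R (-pi)) (Complex R pi)) (contour_integrand p q t)
     + contour_integral (linepath (Complex (-R) pi) (Complex (-R) (-pi))) (contour_integrand p q t)"

lemma rectangle_identity:
  assumes "0 < p" "p \<le> 1" "0 < t" "\<bar>ln t\<bar> < R"
  shows "2 * pi * \<i> * exp_ratio p q (of_real (ln t))
           = 2 * pi * \<i> * of_real (integral {exp (-R)..exp R} (kernel_pq p q t)) + vertical_edges p q t R"
proof -
  let ?G = "contour_integrand p q t" and ?\<gamma> = "rectpath (Complex (-R) (-pi)) (Complex R pi)"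
  have "continuous_on (path_image ?\<gamma>) ?G"
    using path_image_rectpath_subset_strip[OF assms(4)] assms(1-3)
    by (rule continuous_on_contour_integrand[rotated 3])
  from contour_integral_rectpath[OF this]
  have "contour_integral ?\<gamma> ?G =
      contour_integral (linepath (Complex (-R) (-pi)) (Complex R (-pi))) ?G
      + contour_integral (linepath (Complex R (-pi)) (Complex R pi)) ?G
      + contour_integral (linepath (Complex R pi) (Complex (-R) pi)) ?G
      + contour_integral (linepath (Complex (-R) pi) (Complex (-R) (-pi))) ?G"
    by simp
  moreover have "contour_integral ?\<gamma> ?G = 2 * pi * \<i> * exp_ratio p q (of_real (ln t))"
    using has_contour_integral_rectpath[OF assms] by (rule contour_integral_unique)
  moreover have "0 < R" using assms(4) by linarith
  note horizontal_edges_integral[OF assms(1-3) this, of q]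
  ultimately show ?thesis by (simp add: vertical_edges_def algebra_simps)
qed

section \<open>Letting the rectangle grow\<close>

lemma norm_contour_integrand_le:
  assumes "w \<noteq> 0" "0 < t"
    and "norm (exp (of_real q * w) - exp (of_real p * w)) \<le> A"
    and "0 < Y" "Y \<le> norm (exp (of_real p * w) - 1)"
    and "0 < Z" "Z \<le> norm (exp w - of_real t)"
  shows "norm (contour_integrand p q t w) \<le> A * t / (Y * Z)"
proof -
  have "norm (contour_integrand p q t w) = norm (exp (of_real q * w) - exp (of_real p * w)) * t /
      (norm (exp (of_real p * w) - 1) * norm (exp w - of_real t))"
    using assms(1,2) by (simp add: contour_integrand_def exp_ratio_eq norm_divide norm_mult)
  also have "\<dots> \<le> A * t / (Y * Z)"
    using assms(2-7) order_trans[OF norm_ge_zero assms(3)] by (intro frac_le mult_right_mono mult_mono) auto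
  finally show ?thesis .
qed

lemma norm_contour_integrand_right_edge:
  assumes "0 < p" "p \<le> q" "0 < t" "0 < R" "2 \<le> exp (p * R)" "2 * t \<le> exp R" "Re w = R"
  shows "norm (contour_integrand p q t w) \<le> 8 * t * exp ((q - p - 1) * R)"
proof -
  have e: "norm (exp (of_real a * w)) = exp (a * R)" for a by (simp add: assms(7))
  have "exp (p * R) \<le> exp (q * R)" using assms(2,4) by (simp add: mult_right_mono)
  hence "norm (exp (of_real q * w) - exp (of_real p * w)) \<le> 2 * exp (q * R)"
    using norm_triangle_ineq4[of "exp (of_real q * w)" "exp (of_real p * w)"] unfolding e by linarith
  moreover have "exp (p * R) / 2 \<le> norm (exp (of_real p * w) - 1)"
    using norm_triangle_ineq2[of "exp (of_real p * w)" 1] assms(5) unfolding e by simp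
  moreover have "exp R / 2 \<le> norm (exp w - of_real t)"
    using norm_triangle_ineq2[of "exp w" "of_real t"] assms(3,6,7) by simp
  moreover have "w \<noteq> 0" using assms(4,7) by auto
  ultimately have "norm (contour_integrand p q t w) \<le> 2 * exp (q * R) * t / (exp (p * R) / 2 * (exp R / 2))"
    using assms(3) by (intro norm_contour_integrand_le) auto
  also have "\<dots> = 8 * t * exp ((q - p - 1) * R)"
    by (simp add: left_diff_distrib exp_diff exp_add field_simps)
  finally show ?thesis .
qed

lemma norm_contour_integrand_left_edge:
  assumes "0 < p" "p \<le> q" "0 < t" "0 < R" "exp (- (p * R)) \<le> 1 / 2" "exp (- R) \<le> t / 2" "Re w = -R"
  shows "norm (contour_integrand p q t w) \<le> 8 * exp (- (p * R))"
proof -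
  have e: "norm (exp (of_real a * w)) = exp (- (a * R))" for a by (simp add: assms(7))
  have "exp (- (q * R)) \<le> exp (- (p * R))" using assms(2,4) by (simp add: mult_right_mono)
  hence "norm (exp (of_real q * w) - exp (of_real p * w)) \<le> 2 * exp (- (p * R))"
    using norm_triangle_ineq4[of "exp (of_real q * w)" "exp (of_real p * w)"] unfolding e by linarith
  moreover have "1 / 2 \<le> norm (exp (of_real p * w) - 1)"
    using norm_triangle_ineq3[of 1 "exp (of_real p * w)"] assms(5) unfolding e by (simp add: norm_minus_commute)
  moreover have "t / 2 \<le> norm (exp w - of_real t)"
    using norm_triangle_ineq3[of "of_real t" "exp w"] assms(3,6,7) by (simp add: norm_minus_commute)
  moreover have "w \<noteq> 0" using assms(4,7) by auto
  ultimately have "norm (contour_integrand p q t w) \<le> 2 * exp (- (p * R)) * t / (1 / 2 * (t / 2))"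
    using assms(3) by (intro norm_contour_integrand_le) auto
  also have "\<dots> = 8 * exp (- (p * R))"
    using assms(3) by (simp add: field_simps)
  finally show ?thesis .
qed

lemma norm_vertical_edge_le:
  assumes "0 < p" "p \<le> 1" "0 < t" "\<bar>ln t\<bar> < \<bar>x\<bar>"
    and ab: "(a, b) = (Complex x (-pi), Complex x pi) \<or> (a, b) = (Complex x pi, Complex x (-pi))"
    and "\<And>w. Re w = x \<Longrightarrow> norm (contour_integrand p q t w) \<le> B" "0 \<le> B"
  shows "norm (contour_integral (linepath a b) (contour_integrand p q t)) \<le> 2 * pi * B"
proof -
  have seg: "closed_segment a b = closed_segment (Complex x (-pi)) (Complex x pi)"
    using ab by (auto simp: closed_segment_commute)
  have "contour_integrand p q t contour_integrable_on linepath a b"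
    unfolding seg using assms(1-4) vertical_segment_subset_strip[OF assms(4)]
    by (intro contour_integrable_continuous_linepath continuous_on_contour_integrand) (auto simp: seg)
  hence "norm (contour_integral (linepath a b) (contour_integrand p q t)) \<le> B * norm (b - a)"
    using assms(6,7) by (intro contour_integral_bound_linepath) (auto simp: seg closed_segment_same_Re)
  moreover have "norm (b - a) = 2 * pi"
  proof -
    have "sqrt (4 * pi\<^sup>2) = sqrt (2\<^sup>2) * sqrt (pi\<^sup>2)" by (simp add: real_sqrt_mult)
    thus ?thesis using ab by (auto simp: norm_complex_def)
  qed
  ultimately show ?thesis by (simp add: mult.commute)
qed

lemma vertical_edges_tendsto_0:
  assumes "0 < p" "p \<le> q" "q \<le> 1" "0 < t"
  shows "(vertical_edges p q t \<longlongrightarrow> 0) at_top"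
proof (rule Lim_null_comparison)
  define c where "c = q - p - 1"
  have "c < 0" using assms by (simp add: c_def)
  hence "((\<lambda>R. exp (c * R)) \<longlongrightarrow> 0) at_top" by real_asymp
  moreover have "((\<lambda>R. exp (- (p * R))) \<longlongrightarrow> 0) at_top" using assms(1) by real_asymp
  ultimately show "((\<lambda>R. 2 * pi * (8 * t * exp (c * R)) + 2 * pi * (8 * exp (- (p * R)))) \<longlongrightarrow> 0) at_top"
    by (intro tendsto_add_zero tendsto_mult_right_zero)
  have "\<forall>\<^sub>F R in at_top. \<bar>ln t\<bar> < R \<and> 2 \<le> exp (p * R) \<and> 2 * t \<le> exp R \<and> 2 / t \<le> exp R"
    using assms(1) by (intro eventually_conj; real_asymp)
  thus "\<forall>\<^sub>F R in at_top. norm (vertical_edges p q t R)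
          \<le> 2 * pi * (8 * t * exp (c * R)) + 2 * pi * (8 * exp (- (p * R)))"
  proof eventually_elim
    case (elim R)
    hence R: "0 < R" "\<bar>ln t\<bar> < \<bar>R\<bar>" "\<bar>ln t\<bar> < \<bar>-R\<bar>" by auto
    have "exp (- (p * R)) \<le> 1 / 2" "exp (- R) \<le> t / 2"
      using elim assms(4) by (simp_all add: exp_minus field_simps)
    have "norm (contour_integral (linepath (Complex R (-pi)) (Complex R pi)) (contour_integrand p q t))
        \<le> 2 * pi * (8 * t * exp (c * R))"
      using assms elim R unfolding c_def
      by (intro norm_vertical_edge_le norm_contour_integrand_right_edge) auto
    moreover have "norm (contour_integral (linepath (Complex (-R) pi) (Complex (-R) (-pi))) (contour_integrand p q t))
        \<le> 2 * pi * (8 * exp (- (p * R)))"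
      using assms elim R \<open>exp (- (p * R)) \<le> 1 / 2\<close> \<open>exp (- R) \<le> t / 2\<close>
      by (intro norm_vertical_edge_le norm_contour_integrand_left_edge) auto
    ultimately show ?case
      unfolding vertical_edges_def by (rule order_trans[OF norm_triangle_ineq add_mono])
  qed
qed

lemma eventually_indicator_exp_Icc:
  fixes X :: "'a \<Rightarrow> real" and x :: real
  assumes "filterlim X at_top F"
  shows "\<forall>\<^sub>F n in F. indicator {exp (- X n)..exp (X n)} x = (indicator {0<..} x :: real)"
proof (cases "0 < x")
  case True
  have "\<forall>\<^sub>F n in F. \<bar>ln x\<bar> \<le> X n"
    using assms by (simp add: filterlim_at_top)
  thus ?thesis
  proof eventually_elim
    case (elim n)
    hence "exp (- X n) \<le> exp (ln x)" "exp (ln x) \<le> exp (X n)"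
      by (simp_all add: abs_le_iff)
    with True show ?case by simp
  qed
next
  case False
  have "\<not> exp (- X n) \<le> x" for n
    using False exp_gt_zero[of "- X n"] by linarith
  hence "indicator {exp (- X n)..exp (X n)} x = (0::real)" for n
    by (simp add: indicator_def)
  with False show ?thesis by simp
qed

lemma tendsto_integral_exp_Icc:
  fixes f :: "real \<Rightarrow> real"
  assumes f: "set_integrable lborel {0<..} f"
  shows "((\<lambda>R. integral {exp (-R)..exp R} f) \<longlongrightarrow> (LBINT x:{0<..}. f x)) at_top"
proof (rule tendsto_at_topI_sequentially)
  fix X :: "nat \<Rightarrow> real"
  assume X: "filterlim X at_top sequentially"
  have sub: "set_integrable lborel {exp (- X n)..exp (X n)} f" for n
    by (rule set_integrable_subset[OF f]) (auto intro: less_le_trans[OF exp_gt_zero])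
  have "(\<lambda>n. LBINT x:{exp (- X n)..exp (X n)}. f x) \<longlonglongrightarrow> (LBINT x:{0<..}. f x)"
    unfolding set_lebesgue_integral_def
  proof (rule integral_dominated_convergence)
    show "integrable lborel (\<lambda>x. norm (indicator {0<..} x *\<^sub>R f x))"
      using integrable_norm[OF f[unfolded set_integrable_def]] .
    show "(\<lambda>x. indicator {0<..} x *\<^sub>R f x) \<in> borel_measurable lborel"
      using f by (simp add: set_integrable_def)
    show "(\<lambda>x. indicator {exp (- X n)..exp (X n)} x *\<^sub>R f x) \<in> borel_measurable lborel" for n
      using sub[of n] by (simp add: set_integrable_def)
    show "AE x in lborel. norm (indicator {exp (- X n)..exp (X n)} x *\<^sub>R f x)
            \<le> norm (indicator {0<..} x *\<^sub>R f x)" for n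
      by (auto split: split_indicator intro: less_le_trans[OF exp_gt_zero])
    show "AE x in lborel. (\<lambda>n. indicator {exp (- X n)..exp (X n)} x *\<^sub>R f x)
            \<longlonglongrightarrow> indicator {0<..} x *\<^sub>R f x"
      using eventually_indicator_exp_Icc[OF X]
      by (auto intro!: tendsto_eventually elim: eventually_mono)
  qed
  thus "(\<lambda>n. integral {exp (- X n)..exp (X n)} f) \<longlonglongrightarrow> (LBINT x:{0<..}. f x)"
    using set_borel_integral_eq_integral(2)[OF sub] by simp
qed

lemma integral_exp_Icc_tendsto_exp_ratio:
  assumes "0 < p" "p \<le> q" "q \<le> 1" "0 < t"
  shows "((\<lambda>R. integral {exp (-R)..exp R} (kernel_pq p q t)) \<longlongrightarrow> Re (exp_ratio p q (of_real (ln t)))) at_top"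
proof -
  let ?H = "exp_ratio p q (of_real (ln t))"
  have "\<forall>\<^sub>F R in at_top. ?H - vertical_edges p q t R / (2 * pi * \<i>)
          = of_real (integral {exp (-R)..exp R} (kernel_pq p q t))"
    using eventually_gt_at_top[of "\<bar>ln t\<bar>"]
  proof eventually_elim
    case (elim R)
    from rectangle_identity[OF _ _ _ this, of p q] assms show ?case
      by (simp add: field_simps)
  qed
  moreover have "((\<lambda>R. ?H - vertical_edges p q t R / (2 * pi * \<i>)) \<longlongrightarrow> ?H - 0) at_top"
    using vertical_edges_tendsto_0[OF assms] by (intro tendsto_intros tendsto_divide_zero)
  ultimately have "((\<lambda>R. of_real (integral {exp (-R)..exp R} (kernel_pq p q t))) \<longlongrightarrow> ?H) at_top"
    by (simp add: tendsto_cong)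
  from tendsto_Re[OF this] show ?thesis by simp
qed

theorem mainTheorem2:
  fixes p q t :: real
  assumes "0 < p" "p \<le> q" "q \<le> 1" "0 < t"
  shows "set_integrable lborel {0<..} (kernel_pq p q t) \<and>
         fpq p q t = p / q + (p / q) * (LBINT l:{0<..}. kernel_pq p q t l)"
proof
  show integrable: "set_integrable lborel {0<..} (kernel_pq p q t)"
    using assms by (rule set_integrable_kernel_pq)
  have "Re (exp_ratio p q (of_real (ln t))) = (LBINT l:{0<..}. kernel_pq p q t l)"
    using integral_exp_Icc_tendsto_exp_ratio[OF assms] tendsto_integral_exp_Icc[OF integrable]
    by (rule tendsto_unique[OF trivial_limit_at_top_linorder])
  thus "fpq p q t = p / q + (p / q) * (LBINT l:{0<..}. kernel_pq p q t l)"
    using fpq_eq_exp_ratio assms by simp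
qed

end
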